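(* There exist constants $c_5,c_6>0$ such that for all $n\ge1$, the probability that the space-time box $[0,n]\times\left[0,n^{\frac{2-\delta}{2(1-\delta)}}\right]$ is not crossed vertically under the critical contact process is at most $c_5\exp\left(-c_6 n^{\delta/2}\right)$.
   Context: The critical contact process is the one-dimensional contact process on $\mathbb{Z}$ with infection rate $\lambda_c$ (the critical rate) and recovery rate $1$, built from the standard graphical construction. A space-time box $[0,n_1]\times[0,n_2]$ is crossed vertically if there exist sites $x,y\in[0,n_1]$ and an open path in the graphical construction from $(x,0)$ to $(y,n_2)$ contained in the box; it is crossed horizontally if there exist times $0\le t_1<t_2\le n_2$ and an open path from $(0,t_1)$ to $(n_1,t_2)$ contained in the box. The constant $\delta\in(0,1)$ is the box-crossing exponent: there exist a function $w(n)\to\infty$ and constants $c>0$, $p>0$ with $w(n)\le c\,n^{1-\delta}$ for all $n$ such that, for every $n\in\mathbb{N}$, the box $[0,w(n)]\times[0,n]$ is crossed both horizontally and vertically with probability at least $p$. *)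

theory Defs
  imports "HOL-Probability.Probability"
begin

text \<open>A sample point w assigns to each triple (x, k, i) a positive real: for site x, channel k
  (k = 0: recovery marks at x, rate 1; k = 1: infection arrows x to x+1, rate l;
  k = 2: infection arrows x to x-1, rate l; other channels unused) and index i, the
  i-th interarrival time of the corresponding Poisson process on [0, infinity).
  The interarrival times are independent exponentials, so each channel is a Poisson
  point process of the given rate, and all channels are independent.\<close>

type_synonym gc = "int \<times> nat \<times> nat \<Rightarrow> real"

definition chan_rate :: "real \<Rightarrow> nat \<Rightarrow> real" where
  "chan_rate l k = (if k = 0 then 1 else l)"

definition CP :: "real \<Rightarrow> gc measure" where
  "CP l = PiM UNIV (\<lambda>(x, k, i). density lborel (exponential_density (chan_rate l k)))"

definition marks :: "gc \<Rightarrow> int \<Rightarrow> nat \<Rightarrow> real set" where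
  "marks w x k = {(\<Sum>j\<le>i. w (x, k, j)) | i. True}"

definition recovery :: "gc \<Rightarrow> int \<Rightarrow> real \<Rightarrow> bool" where
  "recovery w x t \<longleftrightarrow> t \<in> marks w x 0"

definition arrow :: "gc \<Rightarrow> int \<Rightarrow> int \<Rightarrow> real \<Rightarrow> bool" where
  "arrow w x y t \<longleftrightarrow> (y = x + 1 \<and> t \<in> marks w x 1) \<or> (y = x - 1 \<and> t \<in> marks w x 2)"

text \<open>Open path from (x,s) to (y,t) using only sites in S: the path sits at site xs i during
  the time interval [ts i, ts (i+1)], i = 0..k, with ts 0 = s, ts (k+1) = t; it jumps from
  xs i to xs (i+1) along an infection arrow at time ts (i+1), and meets no recovery mark.\<close>

definition open_path :: "gc \<Rightarrow> int set \<Rightarrow> real \<Rightarrow> int \<Rightarrow> real \<Rightarrow> int \<Rightarrow> bool" where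
  "open_path w S s x t y \<longleftrightarrow> s \<le> t \<and>
     (\<exists>(k::nat) (xs::nat \<Rightarrow> int) (ts::nat \<Rightarrow> real).
        ts 0 = s \<and> ts (Suc k) = t \<and> xs 0 = x \<and> xs k = y \<and>
        (\<forall>i\<le>k. ts i \<le> ts (Suc i) \<and> xs i \<in> S \<and>
                 (\<forall>u. ts i < u \<and> u \<le> ts (Suc i) \<longrightarrow> \<not> recovery w (xs i) u)) \<and>
        (\<forall>i<k. arrow w (xs i) (xs (Suc i)) (ts (Suc i))))"

definition survives :: "gc \<Rightarrow> bool" where
  "survives w \<longleftrightarrow> (\<forall>t\<ge>0. \<exists>y. open_path w UNIV 0 0 t y)"

definition lambda_c :: real where
  "lambda_c = Inf {l. 0 < l \<and> measure (CP l) {w \<in> space (CP l). survives w} > 0}"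

definition box_sites :: "int \<Rightarrow> int set" where
  "box_sites n1 = {z. 0 \<le> z \<and> z \<le> n1}"

definition crossed_vert :: "gc \<Rightarrow> int \<Rightarrow> real \<Rightarrow> bool" where
  "crossed_vert w n1 n2 \<longleftrightarrow>
     (\<exists>x y. x \<in> box_sites n1 \<and> y \<in> box_sites n1 \<and> open_path w (box_sites n1) 0 x n2 y)"

definition crossed_horiz :: "gc \<Rightarrow> int \<Rightarrow> real \<Rightarrow> bool" where
  "crossed_horiz w n1 n2 \<longleftrightarrow>
     (\<exists>t1 t2. 0 \<le> t1 \<and> t1 < t2 \<and> t2 \<le> n2 \<and> open_path w (box_sites n1) t1 0 t2 n1)"

end

(* Let H = n powr ((2 - \<delta>) / (2 * (1 - \<delta>))) and m = ceiling H. The columns [0, W] with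
   W = w(m) <= c m^(1-\<delta>) <= 2 c n^(1-\<delta>/2) fit about n^(\<delta>/2) / (2c + 1) times disjointly
   into [0, n]. By translation invariance each translated column is crossed vertically up to
   time m >= H with probability at least p, and these events are independent since they are
   determined by the Poisson processes of disjoint sets of sites. Stopping such a crossing at
   time H crosses [0, n] x [0, H], so the box fails to be crossed with probability at most
   (1 - p)^(number of columns), which is exponentially small in n^(\<delta>/2). *)

theory Submission
  imports Defs
begin

lemma open_path_cong_sites:
  assumes "\<And>z k i. z \<in> S \<Longrightarrow> w (z, k, i) = w' (z, k, i)"
  shows "open_path w S s x t y \<longleftrightarrow> open_path w' S s x t y"
proof -
  have marks_eq: "marks w z k = marks w' z k" if "z \<in> S" for z k
    using assms that unfolding marks_def by simp
  have "open_path v' S s x t y"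
    if op: "open_path v S s x t y" and eq: "\<And>z k. z \<in> S \<Longrightarrow> marks v z k = marks v' z k"
    for v v' :: gc
  proof -
    from op obtain k xs ts where "s \<le> t" "ts 0 = s" "ts (Suc k) = t" "xs 0 = x" "xs k = y"
      and steps: "\<forall>i\<le>k. ts i \<le> ts (Suc i) \<and> xs i \<in> S \<and>
                   (\<forall>u. ts i < u \<and> u \<le> ts (Suc i) \<longrightarrow> \<not> recovery v (xs i) u)"
      and jumps: "\<forall>i<k. arrow v (xs i) (xs (Suc i)) (ts (Suc i))"
      unfolding open_path_def by blast
    moreover have "\<forall>i\<le>k. \<forall>u. ts i < u \<and> u \<le> ts (Suc i) \<longrightarrow> \<not> recovery v' (xs i) u"
      using steps eq unfolding recovery_def by metis
    moreover have "\<forall>i<k. arrow v' (xs i) (xs (Suc i)) (ts (Suc i))"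
      using steps jumps eq unfolding arrow_def by (metis less_imp_le_nat)
    ultimately show ?thesis unfolding open_path_def by blast
  qed
  then show ?thesis using marks_eq by metis
qed

lemma open_path_mono_sites:
  "open_path w S s x t y \<Longrightarrow> S \<subseteq> S' \<Longrightarrow> open_path w S' s x t y"
  unfolding open_path_def by blast

lemma open_path_endpoints:
  assumes "open_path w S s x t y"
  shows "x \<in> S" "y \<in> S"
  using assms unfolding open_path_def by (metis le0 order_refl)+

definition shift_gc :: "int \<Rightarrow> gc \<Rightarrow> gc" where
  "shift_gc a w = (\<lambda>(z, k, i). w (z + a, k, i))"

lemma open_path_shift_gc:
  assumes "open_path (shift_gc a w) S s x t y"
  shows "open_path w ((\<lambda>z. z + a) ` S) s (x + a) t (y + a)"
proof -
  have marks_shift: "marks (shift_gc a w) z k = marks w (z + a) k" for z k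
    unfolding marks_def shift_gc_def by simp
  from assms obtain k xs ts where "s \<le> t" "ts 0 = s" "ts (Suc k) = t" "xs 0 = x" "xs k = y"
    and "\<forall>i\<le>k. ts i \<le> ts (Suc i) \<and> xs i \<in> S \<and>
           (\<forall>u. ts i < u \<and> u \<le> ts (Suc i) \<longrightarrow> \<not> recovery (shift_gc a w) (xs i) u)"
    and "\<forall>i<k. arrow (shift_gc a w) (xs i) (xs (Suc i)) (ts (Suc i))"
    unfolding open_path_def by blast
  then show ?thesis
    unfolding open_path_def
    by (intro conjI exI[of _ k] exI[of _ "\<lambda>i. xs i + a"] exI[of _ ts])
       (auto simp: recovery_def arrow_def marks_shift)
qed

lemma chain_segment_containing:
  fixes ts :: "nat \<Rightarrow> 'a :: linorder"
  assumes "\<forall>i\<le>k. ts i \<le> ts (Suc i)" "ts 0 \<le> t" "t \<le> ts (Suc k)"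
  shows "\<exists>j\<le>k. ts j \<le> t \<and> t \<le> ts (Suc j)"
  using assms
proof (induction k)
  case (Suc k)
  show ?case
  proof (cases "t \<le> ts (Suc k)")
    case True
    then show ?thesis using Suc by (metis le_Suc_eq)
  next
    case False
    then show ?thesis using Suc.prems by (intro exI[of _ "Suc k"]) auto
  qed
qed auto

lemma open_path_stop:
  assumes "open_path w S s x t y" "s \<le> t'" "t' \<le> t"
  shows "\<exists>y'. open_path w S s x t' y'"
proof -
  from assms(1) obtain k xs ts where "ts 0 = s" "ts (Suc k) = t" "xs 0 = x"
    and steps: "\<forall>i\<le>k. ts i \<le> ts (Suc i) \<and> xs i \<in> S \<and>
                 (\<forall>u. ts i < u \<and> u \<le> ts (Suc i) \<longrightarrow> \<not> recovery w (xs i) u)"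
    and jumps: "\<forall>i<k. arrow w (xs i) (xs (Suc i)) (ts (Suc i))"
    unfolding open_path_def by blast
  moreover obtain j where "j \<le> k" "ts j \<le> t'" "t' \<le> ts (Suc j)"
    using chain_segment_containing[of k ts t'] steps assms(2,3) \<open>ts 0 = s\<close> \<open>ts (Suc k) = t\<close>
    by auto
  ultimately have "open_path w S s x t' (xs j)"
    unfolding open_path_def using assms(2)
    by (intro conjI exI[of _ j] exI[of _ xs] exI[of _ "ts(Suc j := t')"]) auto
  then show ?thesis ..
qed

lemma crossed_vert_of_column:
  assumes "crossed_vert (shift_gc a w) W m" "0 \<le> a" "a + W \<le> n" "0 \<le> H" "H \<le> m"
  shows "crossed_vert w n H"
proof -
  obtain x y where "open_path (shift_gc a w) (box_sites W) 0 x m y"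
    using assms(1) unfolding crossed_vert_def by blast
  then have "open_path w ((\<lambda>z. z + a) ` box_sites W) 0 (x + a) m (y + a)"
    by (rule open_path_shift_gc)
  moreover have "(\<lambda>z. z + a) ` box_sites W \<subseteq> box_sites n"
    using assms(2,3) unfolding box_sites_def by auto
  ultimately have "open_path w (box_sites n) 0 (x + a) m (y + a)"
    by (rule open_path_mono_sites)
  then obtain y' where "open_path w (box_sites n) 0 (x + a) H y'"
    using open_path_stop assms(4,5) by blast
  then show ?thesis
    unfolding crossed_vert_def using open_path_endpoints by blast
qed

definition chan_measure :: "real \<Rightarrow> int \<times> nat \<times> nat \<Rightarrow> real measure" where
  "chan_measure l = (\<lambda>(x, k, i). density lborel (exponential_density (chan_rate l k)))"

lemma CP_eq_PiM: "CP l = PiM UNIV (chan_measure l)"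
  unfolding CP_def chan_measure_def by simp

lemma space_chan_measure [simp]: "space (chan_measure l i) = UNIV"
  unfolding chan_measure_def by (cases i) auto

lemma space_CP [simp]: "space (CP l) = UNIV"
  unfolding CP_eq_PiM space_PiM by auto

lemma prob_space_chan_measure: "0 < l \<Longrightarrow> prob_space (chan_measure l i)"
  unfolding chan_measure_def
  by (cases i) (auto intro!: prob_space_exponential_density simp: chan_rate_def)

lemma prob_space_CP: "0 < l \<Longrightarrow> prob_space (CP l)"
  unfolding CP_eq_PiM by (rule prob_space_PiM) (rule prob_space_chan_measure)

lemma measurable_shift_gc: "shift_gc a \<in> measurable (CP l) (CP l)"
proof -
  have "shift_gc a = (\<lambda>w. \<lambda>n\<in>UNIV. w (case n of (z, k, i) \<Rightarrow> (z + a, k, i)))"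
    by (auto simp: fun_eq_iff shift_gc_def)
  also have "\<dots> \<in> measurable (CP l) (CP l)"
    unfolding CP_eq_PiM
  proof (rule measurable_restrict)
    fix n :: "int \<times> nat \<times> nat"
    obtain z k i where "n = (z, k, i)" by (cases n)
    then show "(\<lambda>w. w (case n of (z, k, i) \<Rightarrow> (z + a, k, i)))
                 \<in> measurable (PiM UNIV (chan_measure l)) (chan_measure l n)"
      using measurable_component_singleton[of "(z + a, k, i)" UNIV "chan_measure l"]
      by (simp add: chan_measure_def)
  qed
  finally show ?thesis .
qed

lemma distr_shift_gc:
  assumes "0 < l"
  shows "distr (CP l) (CP l) (shift_gc a) = CP l"
proof -
  let ?f = "\<lambda>(z :: int, k :: nat, i :: nat). (z + a, k, i)"
  have "inj ?f" by (auto simp: inj_on_def)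
  have reindex: "(\<lambda>i. chan_measure l (?f i)) = chan_measure l"
    by (auto simp: chan_measure_def)
  have shift: "(\<lambda>w. \<lambda>n\<in>UNIV. w (?f n)) = shift_gc a"
    by (auto simp: fun_eq_iff shift_gc_def)
  have "distr (PiM UNIV (chan_measure l)) (PiM UNIV (\<lambda>i. chan_measure l (?f i)))
          (\<lambda>w. \<lambda>n\<in>UNIV. w (?f n)) = PiM UNIV (\<lambda>i. chan_measure l (?f i))"
    using prob_space_chan_measure[OF assms] \<open>inj ?f\<close> by (intro distr_PiM_reindex) auto
  then show ?thesis unfolding reindex shift CP_eq_PiM .
qed

lemma measure_shift_gc_vimage:
  "0 < l \<Longrightarrow> E \<in> sets (CP l) \<Longrightarrow> measure (CP l) (shift_gc a -` E) = measure (CP l) E"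
  using measure_distr[OF measurable_shift_gc, of E l a] distr_shift_gc by simp

section \<open>Independence of events supported on disjoint sets of coordinates\<close>

definition determined_by :: "(int \<times> nat \<times> nat) set \<Rightarrow> gc set \<Rightarrow> bool" where
  "determined_by K E \<longleftrightarrow> (\<forall>w w'. (\<forall>i\<in>K. w i = w' i) \<longrightarrow> (w \<in> E \<longleftrightarrow> w' \<in> E))"

lemma determined_by_Compl: "determined_by K E \<Longrightarrow> determined_by K (- E)"
  unfolding determined_by_def by blast

lemma determined_by_Int:
  "determined_by K A \<Longrightarrow> determined_by K B \<Longrightarrow> determined_by K (A \<inter> B)"
  unfolding determined_by_def by blast

lemma determined_by_crossed_vert:
  "determined_by (box_sites W \<times> UNIV) {w. crossed_vert w W t}"
  unfolding determined_by_def
proof (intro allI impI)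
  fix w w' :: gc
  assume "\<forall>i\<in>box_sites W \<times> UNIV. w i = w' i"
  then have "open_path w (box_sites W) s x t' y \<longleftrightarrow> open_path w' (box_sites W) s x t' y"
    for s x t' y
    by (intro open_path_cong_sites) auto
  then show "w \<in> {w. crossed_vert w W t} \<longleftrightarrow> w' \<in> {w. crossed_vert w W t}"
    unfolding crossed_vert_def by simp
qed

lemma determined_by_crossed_horiz:
  "determined_by (box_sites W \<times> UNIV) {w. crossed_horiz w W t}"
  unfolding determined_by_def
proof (intro allI impI)
  fix w w' :: gc
  assume "\<forall>i\<in>box_sites W \<times> UNIV. w i = w' i"
  then have "open_path w (box_sites W) s x t' y \<longleftrightarrow> open_path w' (box_sites W) s x t' y"
    for s x t' y
    by (intro open_path_cong_sites) auto
  then show "w \<in> {w. crossed_horiz w W t} \<longleftrightarrow> w' \<in> {w. crossed_horiz w W t}"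
    unfolding crossed_horiz_def by simp
qed

lemma determined_by_shift_gc_vimage:
  assumes "determined_by (S \<times> UNIV) E"
  shows "determined_by ((\<lambda>z. z + a) ` S \<times> UNIV) (shift_gc a -` E)"
  unfolding determined_by_def
proof (intro allI impI)
  fix w w' :: gc
  assume "\<forall>i\<in>(\<lambda>z. z + a) ` S \<times> UNIV. w i = w' i"
  then have "\<forall>i\<in>S \<times> UNIV. shift_gc a w i = shift_gc a w' i"
    by (auto simp: shift_gc_def)
  then show "w \<in> shift_gc a -` E \<longleftrightarrow> w' \<in> shift_gc a -` E"
    using assms unfolding determined_by_def by simp
qed

lemma determined_by_vimage_restrict:
  assumes "E \<in> sets (CP l)" "determined_by K E"
  shows "\<exists>B \<in> sets (PiM K (chan_measure l)). E = (\<lambda>w. restrict w K) -` B"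
proof -
  let ?extend = "\<lambda>v. \<lambda>i. if i \<in> K then v i else (0::real)"
  have "?extend \<in> measurable (PiM K (chan_measure l)) (CP l)"
    unfolding CP_eq_PiM
  proof (rule measurable_PiM_single')
    fix i
    show "(\<lambda>v. ?extend v i) \<in> measurable (PiM K (chan_measure l)) (chan_measure l i)"
      by (cases "i \<in> K") simp_all
  qed (auto simp: space_PiM)
  then have "?extend -` E \<inter> space (PiM K (chan_measure l)) \<in> sets (PiM K (chan_measure l))"
    using assms(1) by (rule measurable_sets)
  moreover have "w \<in> E \<longleftrightarrow> ?extend (restrict w K) \<in> E" for w
    using assms(2) unfolding determined_by_def by auto
  ultimately show ?thesis
    by (intro bexI[of _ "?extend -` E \<inter> space (PiM K (chan_measure l))"])
       (auto simp: space_PiM)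
qed

lemma indep_vars_CP_restrict:
  assumes "0 < l" "disjoint_family_on K J"
  shows "prob_space.indep_vars (CP l) (\<lambda>j. PiM (K j) (chan_measure l)) (\<lambda>j w. restrict w (K j)) J"
proof -
  interpret prob_space "CP l" by (rule prob_space_CP[OF assms(1)])
  have coord: "random_variable (chan_measure l i) (\<lambda>w. w i)" for i
    unfolding CP_eq_PiM by (rule measurable_component_singleton) simp
  have marginal: "distr (CP l) (chan_measure l i) (\<lambda>w. w i) = chan_measure l i" for i
    unfolding CP_eq_PiM
    by (rule distr_PiM_component) (auto intro: prob_space_chan_measure[OF assms(1)])
  have restrict_UNIV: "(\<lambda>w. \<lambda>i\<in>UNIV. w i) = (\<lambda>w. w)" by (auto simp: fun_eq_iff)
  have "indep_vars (chan_measure l) (\<lambda>i w. w i) UNIV"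
    by (subst indep_vars_iff_distr_eq_PiM[OF _ coord])
       (auto simp: marginal[unfolded CP_eq_PiM] restrict_UNIV CP_eq_PiM)
  from indep_vars_restrict[OF this _ assms(2)] show ?thesis by simp
qed

lemma measure_CP_INT_determined_by:
  assumes "0 < l" "finite J" "disjoint_family_on K J"
    and "\<And>j. j \<in> J \<Longrightarrow> A j \<in> sets (CP l)" "\<And>j. j \<in> J \<Longrightarrow> determined_by (K j) (A j)"
  shows "measure (CP l) (\<Inter>j\<in>J. A j) = (\<Prod>j\<in>J. measure (CP l) (A j))"
proof -
  interpret prob_space "CP l" by (rule prob_space_CP[OF assms(1)])
  have "indep_sets (\<lambda>j. {(\<lambda>w. restrict w (K j)) -` B \<inter> space (CP l) | B.
                          B \<in> sets (PiM (K j) (chan_measure l))}) J"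
    using indep_vars_CP_restrict[OF assms(1,3)] unfolding indep_vars_def2 by blast
  moreover have "A j \<in> {(\<lambda>w. restrict w (K j)) -` B \<inter> space (CP l) | B.
                          B \<in> sets (PiM (K j) (chan_measure l))}" if "j \<in> J" for j
    using determined_by_vimage_restrict[OF assms(4,5)[OF that]] by auto
  ultimately show ?thesis
    using assms(2) prob_space by (cases "J = {}") (auto intro: indep_setsD)
qed

section \<open>Degenerate rates\<close>

text \<open>If infinitely many factors are not probability measures, the family of cylinder
  measures cannot be extended and \<^const>\<open>PiM\<close> falls back to the zero measure.\<close>

lemma emeasure_PiM_infinitely_many_non_prob:
  assumes inf: "infinite {i\<in>I. emeasure (M i) (space (M i)) \<noteq> 1}"
  shows "emeasure (PiM I M) A = 0"
proof -
  let ?\<Omega> = "\<Pi>\<^sub>E i\<in>I. space (M i)"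
  let ?Idx = "{(J, X). (J \<noteq> {} \<or> I = {}) \<and> finite J \<and> J \<subseteq> I \<and> X \<in> (\<Pi> j\<in>J. sets (M j))}"
  let ?G = "\<lambda>(J, X). prod_emb I M J (\<Pi>\<^sub>E j\<in>J. X j)"
  let ?\<mu> = "\<lambda>(J, X). \<Prod>j\<in>J \<union> {i\<in>I. emeasure (M i) (space (M i)) \<noteq> 1}.
               if j \<in> J then emeasure (M j) (X j) else emeasure (M j) (space (M j))"
  have "{i\<in>I. emeasure (M i) (space (M i)) \<noteq> 1} \<noteq> {}" using inf by (metis finite.emptyI)
  then obtain i0 where "i0 \<in> I" by blast
  let ?empty_cylinder = "({i0}, \<lambda>_. {})"
  have idx: "?empty_cylinder \<in> ?Idx" using \<open>i0 \<in> I\<close> by (simp add: Pi_iff)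
  have empty: "?G ?empty_cylinder = {}" by (simp add: prod_emb_def)
  have one: "?\<mu> ?empty_cylinder = 1"
    using inf by (simp only: prod.case) (rule prod.infinite, simp)
  have no_extension: "\<not> (\<exists>\<mu>'. (\<forall>i\<in>?Idx. \<mu>' (?G i) = ?\<mu> i) \<and>
                         measure_space ?\<Omega> (sigma_sets ?\<Omega> (?G ` ?Idx)) \<mu>')"
  proof
    assume "\<exists>\<mu>'. (\<forall>i\<in>?Idx. \<mu>' (?G i) = ?\<mu> i) \<and>
                  measure_space ?\<Omega> (sigma_sets ?\<Omega> (?G ` ?Idx)) \<mu>'"
    then obtain \<mu>' where extends: "\<forall>i\<in>?Idx. \<mu>' (?G i) = ?\<mu> i"
      and "measure_space ?\<Omega> (sigma_sets ?\<Omega> (?G ` ?Idx)) \<mu>'"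
      by blast
    then have "\<mu>' {} = 0" unfolding measure_space_def positive_def by blast
    moreover have "\<mu>' {} = 1" using bspec[OF extends idx] empty one by simp
    ultimately show False by simp
  qed
  have "PiM I M = measure_of ?\<Omega> (?G ` ?Idx) (\<lambda>_. 0)"
    unfolding PiM_def extend_measure_def using no_extension by (intro if_not_P) blast
  then show ?thesis by (simp add: emeasure_sigma)
qed

lemma emeasure_chan_measure_nonpos_rate:
  "l \<le> 0 \<Longrightarrow> emeasure (chan_measure l (x, 1, i)) UNIV = 0"
  unfolding chan_measure_def chan_rate_def
  by (auto simp: emeasure_density exponential_density_def
           intro!: nn_integral_zero' AE_I2 ennreal_neg mult_nonpos_nonneg)

lemma CP_rate_pos:
  assumes "measure (CP l) E \<noteq> 0"
  shows "0 < l"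
proof (rule ccontr)
  assume "\<not> 0 < l"
  then have "{(x, 1, 0) | x :: int. True} \<subseteq>
               {i. emeasure (chan_measure l i) (space (chan_measure l i)) \<noteq> 1}"
    using emeasure_chan_measure_nonpos_rate by force
  moreover have "infinite {(x, 1 :: nat, 0 :: nat) | x :: int. True}"
  proof -
    have "inj (\<lambda>x :: int. (x, 1 :: nat, 0 :: nat))" by (auto simp: inj_on_def)
    then have "infinite (range (\<lambda>x :: int. (x, 1 :: nat, 0 :: nat)))"
      by (metis finite_imageD infinite_UNIV_int)
    then show ?thesis by (simp add: full_SetCompr_eq)
  qed
  ultimately have "emeasure (CP l) E = 0"
    unfolding CP_eq_PiM
    by (intro emeasure_PiM_infinitely_many_non_prob) (auto dest: finite_subset)
  then show False using assms by (simp add: measure_def)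
qed

section \<open>Crossing a wide box through many independent columns\<close>

lemma measure_not_crossed_vert_le:
  fixes n W :: nat and m H :: real
  assumes "0 < l" "E \<in> sets (CP l)" "determined_by (box_sites (int W) \<times> UNIV) E"
    and crosses: "\<And>w. w \<in> E \<Longrightarrow> crossed_vert w (int W) m"
    and "0 \<le> H" "H \<le> m"
  shows "measure (CP l) {w. \<not> crossed_vert w (int n) H}
           \<le> (1 - measure (CP l) E) ^ ((n + 1) div (W + 1))"
proof -
  interpret prob_space "CP l" by (rule prob_space_CP[OF assms(1)])
  define J where "J = (n + 1) div (W + 1)"
  define a where "a j = int (j * (W + 1))" for j
  define K where "K j = (\<lambda>z. z + a j) ` box_sites (int W) \<times> (UNIV :: (nat \<times> nat) set)" for j
  define A where "A j = - (shift_gc (a j) -` E)" for j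
  have shifted_sets: "shift_gc (a j) -` E \<in> sets (CP l)" for j
    using measurable_sets[OF measurable_shift_gc assms(2)] by simp
  have separated: "a j + int W < a j'" if "j < j'" for j j'
  proof -
    have "Suc j * (W + 1) \<le> j' * (W + 1)" using that by (intro mult_le_mono1) simp
    then have "j * (W + 1) + W < j' * (W + 1)" by simp
    then show ?thesis unfolding a_def by (metis of_nat_add of_nat_less_iff)
  qed
  have "disjoint_family_on K {..<J}"
    unfolding disjoint_family_on_def
  proof (intro ballI impI)
    have disjoint_if: "K j \<inter> K j' = {}" if "a j + int W < a j'" for j j'
      using that by (auto simp: K_def box_sites_def)
    fix j j' :: nat assume "j \<noteq> j'"
    then show "K j \<inter> K j' = {}"
      using separated disjoint_if by (metis Int_commute linorder_neq_iff)
  qed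
  moreover have A_sets: "A j \<in> sets (CP l)" for j
    using sets.compl_sets[OF shifted_sets] by (simp add: A_def Compl_eq_Diff_UNIV)
  moreover have "determined_by (K j) (A j)" for j
    unfolding A_def K_def
    by (intro determined_by_Compl determined_by_shift_gc_vimage assms(3))
  ultimately have independent: "prob (\<Inter>j<J. A j) = (\<Prod>j<J. prob (A j))"
    by (intro measure_CP_INT_determined_by[OF assms(1)]) auto
  have "{w. \<not> crossed_vert w (int n) H} \<subseteq> (\<Inter>j<J. A j)"
  proof (intro subsetI INT_I)
    fix w j assume w: "w \<in> {w. \<not> crossed_vert w (int n) H}" and "j \<in> {..<J}"
    then have "Suc j * (W + 1) \<le> J * (W + 1)" by (intro mult_le_mono1) simp
    also have "\<dots> \<le> n + 1" unfolding J_def by (rule div_times_less_eq_dividend)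
    finally have "j * (W + 1) + W \<le> n" by simp
    then have "a j + int W \<le> int n" unfolding a_def by (metis of_nat_add of_nat_le_iff)
    then have "shift_gc (a j) w \<notin> E"
      using w crosses crossed_vert_of_column[of "a j" w "int W" m "int n" H] assms(5,6)
      unfolding a_def by auto
    then show "w \<in> A j" unfolding A_def by simp
  qed
  then have "prob {w. \<not> crossed_vert w (int n) H} \<le> prob (\<Inter>j<J. A j)"
    using A_sets sets.top[of "CP l"] by (intro finite_measure_mono sets.countable_INT'') auto
  also have "\<dots> = (\<Prod>j<J. 1 - prob E)"
  proof -
    have "prob (A j) = 1 - prob E" for j
      using prob_compl[OF shifted_sets] measure_shift_gc_vimage[OF assms(1,2)]
      by (simp add: A_def Compl_eq_Diff_UNIV)
    then show ?thesis using independent by simp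
  qed
  finally show ?thesis unfolding J_def by simp
qed

lemma column_width_bound:
  fixes \<delta> c W :: real and n m :: nat
  assumes "0 < \<delta>" "\<delta> < 1" "1 \<le> n" "0 < c"
    and m: "real m \<le> real n powr ((2 - \<delta>) / (2 * (1 - \<delta>))) + 1"
    and W: "W \<le> c * real m powr (1 - \<delta>)"
  shows "W \<le> 2 * c * real n powr (1 - \<delta> / 2)"
proof -
  let ?H = "real n powr ((2 - \<delta>) / (2 * (1 - \<delta>)))"
  have "1 \<le> ?H" using assms(1-3) by (simp add: ge_one_powr_ge_zero)
  have "real m powr (1 - \<delta>) \<le> (2 * ?H) powr (1 - \<delta>)"
    using m \<open>1 \<le> ?H\<close> assms(2) by (intro powr_mono2) auto
  also have "\<dots> = 2 powr (1 - \<delta>) * ?H powr (1 - \<delta>)"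
    by (simp add: powr_mult)
  also have "?H powr (1 - \<delta>) = real n powr (1 - \<delta> / 2)"
  proof -
    have "(2 - \<delta>) / (2 * (1 - \<delta>)) * (1 - \<delta>) = 1 - \<delta> / 2"
      using assms(2) by (simp add: field_simps)
    then show ?thesis by (simp add: powr_powr)
  qed
  also have "2 powr (1 - \<delta>) \<le> (2 :: real) powr 1"
    using assms(1) by (intro powr_mono) auto
  finally have "real m powr (1 - \<delta>) \<le> 2 * real n powr (1 - \<delta> / 2)"
    by (simp add: mult_right_mono)
  then have "c * real m powr (1 - \<delta>) \<le> c * (2 * real n powr (1 - \<delta> / 2))"
    using \<open>0 < c\<close> by (intro mult_left_mono) auto
  then show ?thesis using W by simp
qed

lemma block_count_lower_bound:
  fixes n W :: nat and \<delta> C :: real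
  assumes "0 < \<delta>" "\<delta> < 1" "1 \<le> n" "0 \<le> C"
    and W: "real W \<le> C * real n powr (1 - \<delta> / 2)"
  shows "real n powr (\<delta> / 2) / (C + 1) - 1 \<le> real ((n + 1) div (W + 1))"
proof -
  let ?A = "real n powr (1 - \<delta> / 2)"
  have "1 \<le> ?A" using assms(2,3) by (simp add: ge_one_powr_ge_zero)
  have "real n = ?A * real n powr (\<delta> / 2)"
    using assms(3) by (simp add: powr_add[symmetric])
  moreover have "real n powr (\<delta> / 2) / (C + 1) = ?A * real n powr (\<delta> / 2) / ((C + 1) * ?A)"
    using \<open>1 \<le> ?A\<close> by simp
  ultimately have "real n powr (\<delta> / 2) / (C + 1) = real n / ((C + 1) * ?A)"
    by simp
  also have "\<dots> \<le> real (n + 1) / (real W + 1)"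
  proof (rule frac_le)
    show "real W + 1 \<le> (C + 1) * ?A"
      using W \<open>1 \<le> ?A\<close> by (simp add: algebra_simps)
  qed (use \<open>1 \<le> ?A\<close> assms(4) in auto)
  also have "\<dots> < real ((n + 1) div (W + 1)) + 1"
  proof -
    have "\<lfloor>real (n + 1) / real (W + 1)\<rfloor> = int ((n + 1) div (W + 1))"
      by (rule floor_divide_of_nat_eq)
    then show ?thesis using floor_correct[of "real (n + 1) / real (W + 1)"] by (simp add: add.commute)
  qed
  finally show ?thesis by simp
qed

lemma power_le_exp_ln:
  fixes q x :: real
  assumes "0 < q" "q < 1" "x - 1 \<le> real J"
  shows "q ^ J \<le> exp (ln q * x) / q"
proof -
  have "q ^ J = q powr real J" using assms(1) by (simp add: powr_realpow)
  also have "\<dots> \<le> q powr (x - 1)" using assms by (intro powr_mono') auto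
  also have "\<dots> = exp (ln q * x) / q"
    using assms(1) by (simp add: powr_def exp_diff algebra_simps)
  finally show ?thesis .
qed

lemma measure_not_crossed_vert_exp_bound:
  fixes \<delta> c q :: real and n :: nat and wd :: "nat \<Rightarrow> nat"
  assumes "0 < \<delta>" "\<delta> < 1" "0 < c" "0 < q" "q < 1" "1 \<le> n" "0 < l"
    and width: "\<And>m. 1 \<le> m \<Longrightarrow> real (wd m) \<le> c * real m powr (1 - \<delta>)"
    and crossing: "\<And>m. 1 \<le> m \<Longrightarrow> 1 - q \<le>
           measure (CP l) {w. crossed_horiz w (int (wd m)) (real m) \<and> crossed_vert w (int (wd m)) (real m)}"
  shows "measure (CP l) {w. \<not> crossed_vert w (int n) (real n powr ((2 - \<delta>) / (2 * (1 - \<delta>))))}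
           \<le> exp (ln q * (real n powr (\<delta> / 2) / (2 * c + 1))) / q"
proof -
  interpret prob_space "CP l" by (rule prob_space_CP[OF assms(7)])
  define H where "H = real n powr ((2 - \<delta>) / (2 * (1 - \<delta>)))"
  define m where "m = nat \<lceil>H\<rceil>"
  define E where "E = {w. crossed_horiz w (int (wd m)) (real m) \<and> crossed_vert w (int (wd m)) (real m)}"
  have "1 \<le> H" unfolding H_def using assms(1,2,6) by (simp add: ge_one_powr_ge_zero)
  then have "H \<le> real m" "real m \<le> H + 1" "1 \<le> m" unfolding m_def by linarith+
  have "1 - q \<le> prob E" unfolding E_def using crossing \<open>1 \<le> m\<close> .
  then have "E \<in> events" using assms(5) measure_notin_sets[of E] by fastforce
  moreover have "E = {w. crossed_horiz w (int (wd m)) (real m)} \<inter> {w. crossed_vert w (int (wd m)) (real m)}"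
    unfolding E_def by blast
  then have "determined_by (box_sites (int (wd m)) \<times> UNIV) E"
    by (simp add: determined_by_Int determined_by_crossed_horiz determined_by_crossed_vert)
  ultimately have "prob {w. \<not> crossed_vert w (int n) H} \<le> (1 - prob E) ^ ((n + 1) div (wd m + 1))"
    using \<open>1 \<le> H\<close> \<open>H \<le> real m\<close> by (intro measure_not_crossed_vert_le[OF assms(7)]) (auto simp: E_def)
  also have "\<dots> \<le> q ^ ((n + 1) div (wd m + 1))"
    using \<open>1 - q \<le> prob E\<close> by (intro power_mono) auto
  also have "\<dots> \<le> exp (ln q * (real n powr (\<delta> / 2) / (2 * c + 1))) / q"
  proof (rule power_le_exp_ln[OF assms(4,5)])
    have "real (wd m) \<le> 2 * c * real n powr (1 - \<delta> / 2)"
      using column_width_bound[OF assms(1,2,6,3)] \<open>real m \<le> H + 1\<close> width[OF \<open>1 \<le> m\<close>]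
      unfolding H_def by blast
    then show "real n powr (\<delta> / 2) / (2 * c + 1) - 1 \<le> real ((n + 1) div (wd m + 1))"
      using block_count_lower_bound[OF assms(1,2,6), of "2 * c"] assms(3) by simp
  qed
  finally show ?thesis unfolding H_def .
qed

theorem lemma6:
  fixes \<delta> :: real
  assumes "0 < \<delta>" and "\<delta> < 1"
    and "\<exists>(wd::nat \<Rightarrow> nat) c p. filterlim wd at_top at_top \<and> c > 0 \<and> p > 0 \<and>
           (\<forall>n\<ge>1. real (wd n) \<le> c * real n powr (1 - \<delta>)) \<and>
           (\<forall>n\<ge>1. measure (CP lambda_c)
               {w \<in> space (CP lambda_c). crossed_horiz w (int (wd n)) (real n) \<and>
                                          crossed_vert w (int (wd n)) (real n)} \<ge> p)"
  shows "\<exists>c5>0. \<exists>c6>0. \<forall>n::nat\<ge>1.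
           measure (CP lambda_c)
             {w \<in> space (CP lambda_c).
                \<not> crossed_vert w (int n) (real n powr ((2 - \<delta>) / (2 * (1 - \<delta>))))}
           \<le> c5 * exp (- c6 * real n powr (\<delta> / 2))"
proof -
  obtain wd c p where "0 < c" "0 < p"
    and width: "\<forall>n\<ge>1. real ((wd :: nat \<Rightarrow> nat) n) \<le> c * real n powr (1 - \<delta>)"
    and crossing: "\<forall>n\<ge>1. p \<le> measure (CP lambda_c)
         {w. crossed_horiz w (int (wd n)) (real n) \<and> crossed_vert w (int (wd n)) (real n)}"
    using assms(3) by auto
  have "measure (CP lambda_c) {w. crossed_horiz w (int (wd 1)) 1 \<and> crossed_vert w (int (wd 1)) 1} \<noteq> 0"
    using crossing \<open>0 < p\<close> by force
  then have "0 < lambda_c" by (rule CP_rate_pos)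
  define q where "q = 1 - min p (1 / 2)"
  have "0 < q" "q < 1" "1 - q \<le> p" using \<open>0 < p\<close> by (auto simp: q_def)
  have "0 < 1 / q" using \<open>0 < q\<close> by simp
  moreover have "0 < - ln q / (2 * c + 1)"
    using \<open>0 < q\<close> \<open>q < 1\<close> \<open>0 < c\<close> by (intro divide_pos_pos) auto
  moreover have "measure (CP lambda_c)
                   {w \<in> space (CP lambda_c). \<not> crossed_vert w (int n) (real n powr ((2 - \<delta>) / (2 * (1 - \<delta>))))}
                 \<le> 1 / q * exp (- (- ln q / (2 * c + 1)) * real n powr (\<delta> / 2))" if "1 \<le> n" for n
  proof -
    have "\<And>m. 1 \<le> m \<Longrightarrow> 1 - q \<le> measure (CP lambda_c)
            {w. crossed_horiz w (int (wd m)) (real m) \<and> crossed_vert w (int (wd m)) (real m)}"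
      using crossing \<open>1 - q \<le> p\<close> by force
    from measure_not_crossed_vert_exp_bound[OF assms(1,2) \<open>0 < c\<close> \<open>0 < q\<close> \<open>q < 1\<close> that
           \<open>0 < lambda_c\<close> _ this] width
    show ?thesis by simp
  qed
  ultimately show ?thesis by blast
qed

end
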